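(* Fix a positive integer $n$ and form the graph whose vertices are the unordered tuples (multisets) of powers of $2$ with sum $n$, with an edge between a tuple $\lambda$ of length $\ell$ and a tuple $\mu$ of length $\ell-1$ whenever $\mu$ is obtained from $\lambda$ by replacing exactly two entries of $\lambda$ by their sum. Then for every $\ell$, the subgraph induced on all vertices of length $\ell$ and $\ell-1$ is connected; in particular any two tuples of length $\ell$ are joined by a path in this subgraph. *)

theory Defs
  imports Main "HOL-Library.Multiset"
begin

definition pow2 :: "nat \<Rightarrow> bool" where
  "pow2 k \<longleftrightarrow> (\<exists>i. k = 2 ^ i)"

definition pow2_tuples :: "nat \<Rightarrow> nat multiset set" where
  "pow2_tuples n = {M. (\<forall>x \<in># M. pow2 x) \<and> sum_mset M = n}"

definition merge_step :: "nat multiset \<Rightarrow> nat multiset \<Rightarrow> bool" where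
  "merge_step lam mu \<longleftrightarrow>
     (\<exists>a b. {#a, b#} \<subseteq># lam \<and> mu = lam - {#a, b#} + {#a + b#})"

definition tuple_adj :: "nat \<Rightarrow> nat multiset \<Rightarrow> nat multiset \<Rightarrow> bool" where
  "tuple_adj n x y \<longleftrightarrow> x \<in> pow2_tuples n \<and> y \<in> pow2_tuples n \<and>
     (merge_step x y \<or> merge_step y x)"

definition layer :: "nat \<Rightarrow> nat \<Rightarrow> nat multiset set" where
  "layer n l = {M \<in> pow2_tuples n. size M = l \<or> size M + 1 = l}"

definition induced_adj :: "nat multiset set \<Rightarrow> (nat multiset \<Rightarrow> nat multiset \<Rightarrow> bool)
    \<Rightarrow> nat multiset \<Rightarrow> nat multiset \<Rightarrow> bool" where
  "induced_adj V E x y \<longleftrightarrow> x \<in> V \<and> y \<in> V \<and> E x y"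

end

theory Submission
  imports Defs
begin

text \<open>
  Induction on \<open>n\<close>, for all lengths at once. If both tuples contain a 1, remove one 1 from
  each, connect the results in the layers for \<open>n - 1\<close> and put the 1 back. If neither contains
  a 1, all entries are even: halve, connect for \<open>n / 2\<close> and double. If only \<open>\<mu>\<close> is free of 1s,
  then \<open>n\<close> is even and \<open>2\<ell> \<le> n + 2\<close>, so the 1s of \<open>\<lambda>\<close> come in pairs; a pair can be merged inside
  the layer, after first splitting an entry \<open>\<ge> 4\<close> into two halves when \<open>\<lambda>\<close> has the shorter
  length (such an entry exists because of the bound). Repeating this reaches a tuple without 1s.
\<close>

abbreviation layer_edge :: "nat \<Rightarrow> nat \<Rightarrow> nat multiset \<Rightarrow> nat multiset \<Rightarrow> bool" where
  "layer_edge n l \<equiv> induced_adj (layer n l) (tuple_adj n)"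

abbreviation layer_path :: "nat \<Rightarrow> nat \<Rightarrow> nat multiset \<Rightarrow> nat multiset \<Rightarrow> bool" where
  "layer_path n l \<equiv> (layer_edge n l)\<^sup>*\<^sup>*"

lemma rtranclp_map:
  assumes "\<And>x y. r x y \<Longrightarrow> s (f x) (f y)" and "r\<^sup>*\<^sup>* x y"
  shows "s\<^sup>*\<^sup>* (f x) (f y)"
  using assms(2) by induction (auto intro: rtranclp.rtrancl_into_rtrancl assms(1))

lemma pow2_ge_1: "pow2 x \<Longrightarrow> 1 \<le> x"
  unfolding pow2_def by auto

lemma pow2_double: "pow2 x \<Longrightarrow> pow2 (2 * x)"
  unfolding pow2_def by (metis power_Suc)

lemma pow2_half:
  assumes "pow2 x" "x \<noteq> 1"
  shows "even x" "pow2 (x div 2)"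
proof -
  obtain i where "x = 2 ^ Suc i"
    using assms unfolding pow2_def by (metis not0_implies_Suc power_0)
  then show "even x" "pow2 (x div 2)"
    unfolding pow2_def by simp_all
qed

lemma pow2_cases: "pow2 x \<Longrightarrow> x = 1 \<or> x = 2 \<or> 4 \<le> x"
proof -
  assume "pow2 x"
  then obtain i where i: "x = 2 ^ i" unfolding pow2_def by blast
  consider "i = 0" | "i = 1" | "2 \<le> i" by linarith
  then show ?thesis
  proof cases
    case 3
    then have "(2::nat) ^ 2 \<le> 2 ^ i" by (rule power_increasing) simp
    then show ?thesis using i by simp
  qed (use i in auto)
qed

lemma even_sum_mset_iff_even_count_1:
  "\<forall>x\<in>#M. pow2 x \<Longrightarrow> even (sum_mset M) \<longleftrightarrow> even (count M 1)"
proof (induction M)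
  case (add x M)
  then show ?case using pow2_half[of x] by (cases "x = 1") auto
qed simp

lemma mult_size_le_sum_mset: "\<forall>x\<in>#M. k \<le> x \<Longrightarrow> k * size M \<le> sum_mset (M :: nat multiset)"
  by (induction M) auto

lemma sum_mset_add_count_1: "\<forall>x\<in>#M. x = 1 \<or> x = 2 \<Longrightarrow> sum_mset M + count M 1 = 2 * size M"
  by (induction M) auto

lemma sum_mset_image_mult: "sum_mset (image_mset ((*) c) M) = c * sum_mset (M :: 'a::semiring_0 multiset)"
  by (induction M) (auto simp: distrib_left)

lemma merge_step_add_mset: "merge_step x y \<Longrightarrow> merge_step (add_mset p x) (add_mset p y)"
  unfolding merge_step_def
proof (elim exE conjE)
  fix a b assume ab: "{#a, b#} \<subseteq># x" and y: "y = x - {#a, b#} + {#a + b#}"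
  have "{#a, b#} \<subseteq># add_mset p x"
    using ab by (rule subset_mset.order_trans) simp
  moreover have "add_mset p y = add_mset p x - {#a, b#} + {#a + b#}"
    using subset_mset.add_diff_assoc2[OF ab, of "{#p#}"] y
    by (metis add_mset_add_single union_mset_add_mset_left)
  ultimately show "\<exists>a b. {#a, b#} \<subseteq># add_mset p x \<and> add_mset p y = add_mset p x - {#a, b#} + {#a + b#}"
    by blast
qed

lemma merge_step_image_mset:
  assumes "\<And>a b. f (a + b) = f a + f b" and "merge_step x y"
  shows "merge_step (image_mset f x) (image_mset f y)"
proof -
  obtain a b where ab: "{#a, b#} \<subseteq># x" and y: "y = x - {#a, b#} + {#a + b#}"
    using assms(2) unfolding merge_step_def by blast
  have "{#f a, f b#} \<subseteq># image_mset f x"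
    using image_mset_subseteq_mono[OF ab] by simp
  moreover have "image_mset f y = image_mset f x - {#f a, f b#} + {#f a + f b#}"
    using y ab assms(1) by (simp add: image_mset_Diff)
  ultimately show ?thesis unfolding merge_step_def by blast
qed

lemma merge_in_pow2_tuples:
  assumes "x \<in> pow2_tuples n" "{#a, b#} \<subseteq># x" "pow2 (a + b)"
  shows "add_mset (a + b) (x - {#a, b#}) \<in> pow2_tuples n"
    and "size (add_mset (a + b) (x - {#a, b#})) + 1 = size x"
proof -
  have x: "{#a, b#} + (x - {#a, b#}) = x"
    using assms(2) by (rule subset_mset.add_diff_inverse)
  have "sum_mset (x - {#a, b#}) + (a + b) = sum_mset x"
    using arg_cong[OF x, of sum_mset] by simp
  moreover have "size (x - {#a, b#}) + 2 = size x"
    using arg_cong[OF x, of size] by simp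
  ultimately show "add_mset (a + b) (x - {#a, b#}) \<in> pow2_tuples n"
    and "size (add_mset (a + b) (x - {#a, b#})) + 1 = size x"
    using assms(1,3) unfolding pow2_tuples_def by (auto dest: in_diffD)
qed

lemma layer_0: "x \<in> layer 0 l \<Longrightarrow> x = {#}"
proof -
  assume "x \<in> layer 0 l"
  then have "\<forall>a\<in>#x. pow2 a \<and> a = 0"
    unfolding layer_def pow2_tuples_def by simp
  then have "\<forall>a\<in>#x. False"
    using pow2_ge_1 by fastforce
  then show "x = {#}"
    by auto
qed

lemma add_mset_in_layer: "x \<in> layer m k \<Longrightarrow> pow2 p \<Longrightarrow> add_mset p x \<in> layer (m + p) (Suc k)"
  unfolding layer_def pow2_tuples_def by auto

lemma diff_singleton_in_layer:
  assumes "x \<in> layer n (Suc k)" "p \<in># x"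
  shows "x - {#p#} \<in> layer (n - p) k"
proof -
  have x: "add_mset p (x - {#p#}) = x"
    using assms(2) by (rule insert_DiffM)
  show ?thesis
    using arg_cong[OF x, of sum_mset] arg_cong[OF x, of size] assms(1)
    unfolding layer_def pow2_tuples_def by (auto dest: in_diffD)
qed

lemma double_in_layer: "x \<in> layer m k \<Longrightarrow> image_mset ((*) 2) x \<in> layer (2 * m) k"
  unfolding layer_def pow2_tuples_def by (auto simp: pow2_double sum_mset_image_mult)

lemma layer_without_one_eq_double:
  assumes "x \<in> layer n l" "1 \<notin># x"
  obtains y where "y \<in> layer (n div 2) l" "x = image_mset ((*) 2) y"
proof
  let ?y = "image_mset (\<lambda>a. a div 2) x"
  have halves: "even a" "pow2 (a div 2)" if "a \<in># x" for a
  proof -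
    have "pow2 a" "a \<noteq> 1"
      using that assms unfolding layer_def pow2_tuples_def by auto
    then show "even a" "pow2 (a div 2)"
      by (simp_all add: pow2_half)
  qed
  have "image_mset ((*) 2) ?y = image_mset id x"
    unfolding multiset.map_comp by (rule image_mset_cong) (simp add: halves)
  then have x: "image_mset ((*) 2) ?y = x"
    by simp
  then show "x = image_mset ((*) 2) ?y" ..
  have "2 * sum_mset ?y = n"
    using arg_cong[OF x, of sum_mset] assms(1)
    unfolding sum_mset_image_mult layer_def pow2_tuples_def by simp
  then show "?y \<in> layer (n div 2) l"
    using assms(1) halves unfolding layer_def pow2_tuples_def by auto
qed

lemma layer_without_one_bound:
  assumes "mu \<in> layer n l" "1 \<notin># mu"
  shows "even n" and "2 * l \<le> n + 2"
proof -
  have pow2: "\<forall>x\<in>#mu. pow2 x" and sum: "sum_mset mu = n"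
    using assms(1) unfolding layer_def pow2_tuples_def by auto
  moreover have "count mu 1 = 0"
    using assms(2) by (simp add: count_eq_zero_iff)
  ultimately show "even n"
    using even_sum_mset_iff_even_count_1[OF pow2] by simp
  have "\<forall>x\<in>#mu. 2 \<le> x"
    using pow2 assms(2) pow2_cases by fastforce
  then have "2 * size mu \<le> n"
    using mult_size_le_sum_mset sum by blast
  then show "2 * l \<le> n + 2"
    using assms(1) unfolding layer_def by auto
qed

lemma layer_edge_iff:
  "layer_edge n l x y \<longleftrightarrow> x \<in> layer n l \<and> y \<in> layer n l \<and> (merge_step x y \<or> merge_step y x)"
  unfolding induced_adj_def tuple_adj_def layer_def by auto

lemma layer_path_sym: "layer_path n l x y \<Longrightarrow> layer_path n l y x"
  by (rule sympD[OF symp_rtranclp]) (auto intro: sympI simp: layer_edge_iff)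

lemma layer_edge_merge:
  assumes "x \<in> layer n l" "size x = l" "{#a, b#} \<subseteq># x" "pow2 (a + b)"
  shows "layer_edge n l x (add_mset (a + b) (x - {#a, b#}))"
proof -
  have "merge_step x (add_mset (a + b) (x - {#a, b#}))"
    using assms(3) unfolding merge_step_def by auto
  moreover have "add_mset (a + b) (x - {#a, b#}) \<in> layer n l"
    using merge_in_pow2_tuples[OF _ assms(3,4)] assms(1,2) unfolding layer_def by auto
  ultimately show ?thesis
    using assms(1) by (simp add: layer_edge_iff)
qed

lemma layer_edge_split:
  assumes "x \<in> layer n l" "size x + 1 = l" "2 * h \<in># x" "pow2 h"
  shows "layer_edge n l x (add_mset h (add_mset h (x - {#2 * h#})))"
proof -
  define z where "z = add_mset h (add_mset h (x - {#2 * h#}))"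
  have x: "add_mset (2 * h) (x - {#2 * h#}) = x"
    using assms(3) by (rule insert_DiffM)
  have "sum_mset z = sum_mset x" "size z = l"
    using arg_cong[OF x, of sum_mset] arg_cong[OF x, of size] assms(2) unfolding z_def by auto
  then have "z \<in> layer n l"
    using assms(1,4) unfolding z_def layer_def pow2_tuples_def by (auto dest: in_diffD)
  moreover have "add_mset (h + h) (z - {#h, h#}) = x"
    using x unfolding z_def by (simp add: mult_2)
  ultimately have "layer_edge n l z x"
    using layer_edge_merge[of z n l h h] pow2_double[OF assms(4)] \<open>size z = l\<close>
    unfolding z_def by (simp add: mult_2)
  then show ?thesis
    unfolding z_def by (auto simp: layer_edge_iff)
qed

lemma layer_path_add_mset:
  "layer_path m k x y \<Longrightarrow> pow2 p \<Longrightarrow> layer_path (m + p) (Suc k) (add_mset p x) (add_mset p y)"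
  by (erule rtranclp_map[where f = "add_mset p", rotated])
    (auto simp: layer_edge_iff add_mset_in_layer merge_step_add_mset)

lemma layer_path_double:
  "layer_path m k x y \<Longrightarrow> layer_path (2 * m) k (image_mset ((*) 2) x) (image_mset ((*) 2) y)"
proof (erule rtranclp_map[where f = "image_mset ((*) 2)", rotated])
  have "merge_step (image_mset ((*) 2) x) (image_mset ((*) 2) y)" if "merge_step x y" for x y
    using merge_step_image_mset[OF _ that, of "(*) 2"] by (simp add: distrib_left)
  then show "layer_edge (2 * m) k (image_mset ((*) 2) x) (image_mset ((*) 2) y)"
    if "layer_edge m k x y" for x y
    using that unfolding layer_edge_iff by (blast intro: double_in_layer)
qed

lemma layer_path_merge_two_ones_long:
  assumes "x \<in> layer n l" "size x = l" "2 \<le> count x 1"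
  shows "\<exists>x' \<in> layer n l. count x' 1 + 2 = count x 1 \<and> layer_path n l x x'"
proof -
  have "{#1, 1#} \<subseteq># x"
    using assms(3) by (simp add: subseteq_mset_def)
  moreover have "pow2 (1 + 1)"
    unfolding pow2_def by (metis one_add_one power_one_right)
  ultimately have edge: "layer_edge n l x (add_mset (1 + 1) (x - {#1, 1#}))"
    using layer_edge_merge assms(1,2) by blast
  show ?thesis
  proof
    show "add_mset (1 + 1) (x - {#1, 1#}) \<in> layer n l"
      using edge by (simp add: layer_edge_iff)
    show "count (add_mset (1 + 1) (x - {#1, 1#})) 1 + 2 = count x 1 \<and>
        layer_path n l x (add_mset (1 + 1) (x - {#1, 1#}))"
      using assms(3) edge by auto
  qed
qed

lemma short_vertex_has_entry_ge_4:
  assumes "lam \<in> layer n l" "size lam + 1 = l" "2 \<le> count lam 1" "2 * l \<le> n + 2"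
  obtains x where "x \<in># lam" "4 \<le> x"
proof (rule ccontr)
  assume "\<not> thesis"
  moreover have "\<forall>x\<in>#lam. pow2 x" and sum: "sum_mset lam = n"
    using assms(1) unfolding layer_def pow2_tuples_def by auto
  ultimately have "\<forall>x\<in>#lam. x = 1 \<or> x = 2"
    using that pow2_cases by fastforce
  then show False
    using sum_mset_add_count_1 assms(2-4) sum by fastforce
qed

lemma layer_path_merge_two_ones:
  assumes "lam \<in> layer n l" "2 \<le> count lam 1" "2 * l \<le> n + 2"
  shows "\<exists>lam' \<in> layer n l. count lam' 1 + 2 = count lam 1 \<and> layer_path n l lam lam'"
proof (cases "size lam = l")
  case True
  then show ?thesis
    using layer_path_merge_two_ones_long assms(1,2) by blast
next
  case False
  then have size: "size lam + 1 = l"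
    using assms(1) unfolding layer_def by auto
  obtain x where x: "x \<in># lam" "4 \<le> x"
    using short_vertex_has_entry_ge_4[OF assms(1) size assms(2,3)] .
  define h where "h = x div 2"
  have "pow2 h" "2 * h = x" "h \<noteq> 1"
    using pow2_half[of x] x assms(1) unfolding h_def layer_def pow2_tuples_def by auto
  define lam2 where "lam2 = add_mset h (add_mset h (lam - {#x#}))"
  have edge: "layer_edge n l lam lam2"
    using layer_edge_split[OF assms(1) size] x(1) \<open>pow2 h\<close> \<open>2 * h = x\<close>
    unfolding lam2_def by metis
  have "size lam2 = l" "count lam2 1 = count lam 1"
    using size x \<open>h \<noteq> 1\<close> unfolding lam2_def by (auto dest!: multi_member_split)
  moreover have "lam2 \<in> layer n l"
    using edge by (simp add: layer_edge_iff)
  ultimately show ?thesis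
    using layer_path_merge_two_ones_long[of lam2] edge assms(2)
    by (metis r_into_rtranclp rtranclp_trans)
qed

lemma layer_path_to_vertex_without_one:
  assumes "even n" "2 * l \<le> n + 2" "lam \<in> layer n l"
  shows "\<exists>nu \<in> layer n l. 1 \<notin># nu \<and> layer_path n l lam nu"
  using assms(3)
proof (induction "count lam 1" arbitrary: lam rule: less_induct)
  case less
  show ?case
  proof (cases "count lam 1 = 0")
    case True
    then show ?thesis using less.prems by (auto simp: count_eq_zero_iff)
  next
    case False
    have "even (count lam 1)"
      using less.prems assms(1) even_sum_mset_iff_even_count_1
      unfolding layer_def pow2_tuples_def by auto
    with False have "2 \<le> count lam 1" by presburger
    then obtain lam' where "lam' \<in> layer n l" "count lam' 1 < count lam 1" "layer_path n l lam lam'"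
      using layer_path_merge_two_ones less.prems assms(2) by fastforce
    moreover obtain nu where "nu \<in> layer n l" "1 \<notin># nu" "layer_path n l lam' nu"
      using less.hyps[OF \<open>count lam' 1 < count lam 1\<close> \<open>lam' \<in> layer n l\<close>] by blast
    ultimately show ?thesis
      by (meson rtranclp_trans)
  qed
qed

lemma layer_path_with_one:
  assumes IH: "\<And>x y. x \<in> layer (n - 1) (l - 1) \<Longrightarrow> y \<in> layer (n - 1) (l - 1)
      \<Longrightarrow> layer_path (n - 1) (l - 1) x y"
    and "lam \<in> layer n l" "mu \<in> layer n l" "1 \<in># lam" "1 \<in># mu"
  shows "layer_path n l lam mu"
proof -
  have "size lam \<noteq> 0" "size lam \<le> l" "1 \<le> n"
    using assms(2,4) unfolding layer_def pow2_tuples_def by (auto dest!: multi_member_split)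
  then obtain k where l: "l = Suc k"
    by (cases l) auto
  have "layer_path (n - 1) k (lam - {#1#}) (mu - {#1#})"
    using IH[unfolded l diff_Suc_1] diff_singleton_in_layer assms(2-5) unfolding l by blast
  moreover have "pow2 1"
    unfolding pow2_def by (rule exI[of _ 0]) simp
  ultimately have "layer_path (n - 1 + 1) (Suc k) (add_mset 1 (lam - {#1#})) (add_mset 1 (mu - {#1#}))"
    by (rule layer_path_add_mset)
  then show ?thesis
    using assms(4,5) \<open>1 \<le> n\<close> unfolding l by simp
qed

lemma layer_path_without_one:
  assumes IH: "\<And>x y. x \<in> layer (n div 2) l \<Longrightarrow> y \<in> layer (n div 2) l
      \<Longrightarrow> layer_path (n div 2) l x y"
    and "lam \<in> layer n l" "mu \<in> layer n l" "1 \<notin># lam" "1 \<notin># mu"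
  shows "layer_path n l lam mu"
proof -
  obtain lam' where lam': "lam' \<in> layer (n div 2) l" "lam = image_mset ((*) 2) lam'"
    using layer_without_one_eq_double[OF assms(2,4)] .
  obtain mu' where mu': "mu' \<in> layer (n div 2) l" "mu = image_mset ((*) 2) mu'"
    using layer_without_one_eq_double[OF assms(3,5)] .
  have "2 * (n div 2) = n"
    using layer_without_one_bound(1)[OF assms(2,4)] by simp
  then show ?thesis
    using layer_path_double[OF IH[OF lam'(1) mu'(1)]] lam'(2) mu'(2) by simp
qed

lemma layer_path_connected: "lam \<in> layer n l \<Longrightarrow> mu \<in> layer n l \<Longrightarrow> layer_path n l lam mu"
proof (induction n arbitrary: l lam mu rule: less_induct)
  case (less n)
  have same: "layer_path n l x y"
    if "x \<in> layer n l" "y \<in> layer n l" "1 \<in># x \<longleftrightarrow> 1 \<in># y" for x y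
  proof (cases "n = 0")
    case True
    then show ?thesis using that layer_0 by blast
  next
    case False
    then have "n - 1 < n" "n div 2 < n" by auto
    then show ?thesis
      using layer_path_with_one[OF less.IH[OF \<open>n - 1 < n\<close>] that(1,2)]
        layer_path_without_one[OF less.IH[OF \<open>n div 2 < n\<close>] that(1,2)] that(3)
      by blast
  qed
  have mixed: "layer_path n l x y" if xy: "x \<in> layer n l" "y \<in> layer n l" "1 \<notin># y" for x y
  proof -
    obtain z where "z \<in> layer n l" "1 \<notin># z" "layer_path n l x z"
      using layer_path_to_vertex_without_one[OF layer_without_one_bound[OF xy(2,3)] xy(1)] by blast
    then show ?thesis
      using same[of z y] xy by (meson rtranclp_trans)
  qed
  show ?case
  proof (cases "1 \<in># mu")
    case True
    then show ?thesis
      using same[OF less.prems] mixed[OF less.prems(2,1)] layer_path_sym by blast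
  qed (use mixed less.prems in blast)
qed

theorem mainTheorem11:
  fixes n l :: nat and lam mu :: "nat multiset"
  assumes "n > 0"
    and "lam \<in> layer n l" and "mu \<in> layer n l"
  shows "(induced_adj (layer n l) (tuple_adj n))\<^sup>*\<^sup>* lam mu"
  using layer_path_connected assms(2,3) .

end
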